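(* Let $n\ge2$. There exist constants $0<c_1\le c_2$ depending only on $n$ such that for all $z\in\mathbb{C}\setminus\mathbb{R}$ with $|z|\ge1$, $$c_1\frac{|\Im z|}{|z|^6}\le\psi(z)\le c_2\frac{|\Im z|}{|z|^6}.$$
   Context: For $z\in\mathbb{C}\setminus\mathbb{R}$, let $D_z$ be the set of $(t_1,\dots,t_{n-1})\in\mathbb{R}^{n-1}$ with $\max_{1\le k\le n-1}|t_k|\le 1$, $\left|z\sum_{k=1}^{n-1}t_k\left(z^k-\frac{\Im z^{k+1}}{\Im z}\right)\right|\le 1$ and $\left|\frac{1}{\Im z}\sum_{k=1}^{n-1}t_k\Im z^{k+1}\right|\le 1$, and define $$\psi(z)=\frac{1}{|\Im z|}\int_{D_z}\left|\sum_{k=1}^{n-1}t_k\left((k+1)z^{k}-\frac{\Im z^{k+1}}{\Im z}\right)\right|^2dt_1\dots dt_{n-1}.$$ *)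

theory Defs
  imports "HOL-Analysis.Analysis"
begin

text \<open>Points of R^(n-1) are represented as functions t :: nat => real, extensional on
  the index set {1..n-1}; the measure is the product Lebesgue measure on that set.\<close>

definition cube_measure :: "nat \<Rightarrow> (nat \<Rightarrow> real) measure" where
  "cube_measure n = Pi\<^sub>M {1..n-1} (\<lambda>_. lborel)"

definition Dz :: "nat \<Rightarrow> complex \<Rightarrow> (nat \<Rightarrow> real) set" where
  "Dz n z = {t \<in> PiE {1..n-1} (\<lambda>_. UNIV).
      (\<forall>k\<in>{1..n-1}. \<bar>t k\<bar> \<le> 1) \<and>
      cmod (z * (\<Sum>k=1..n-1. complex_of_real (t k) *
                 (z ^ k - complex_of_real (Im (z ^ (k+1)) / Im z)))) \<le> 1 \<and>
      \<bar>(1 / Im z) * (\<Sum>k=1..n-1. t k * Im (z ^ (k+1)))\<bar> \<le> 1}"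

definition psi :: "nat \<Rightarrow> complex \<Rightarrow> real" where
  "psi n z = (1 / \<bar>Im z\<bar>) *
     (LINT t : Dz n z | cube_measure n.
        (cmod (\<Sum>k=1..n-1. complex_of_real (t k) *
              (of_nat (k+1) * z ^ k - complex_of_real (Im (z ^ (k+1)) / Im z)))) ^ 2)"

end

theory Submission
  imports Defs
begin

text \<open>
  With \<open>m = n - 1\<close>, substitute \<open>t_k = u_k - 2 Re z u_(k+1) + |z|^2 u_(k+2)\<close> (terms with index
  above \<open>m\<close> omitted): a unimodular triangular map built from the real polynomial
  \<open>(X - z)(X - cnj z) = X^2 - 2 Re z X + |z|^2\<close>. It preserves Lebesgue measure, and by summation by
  parts its transpose acts on the coefficient sequences in the definitions of \<open>D_z\<close> and \<open>psi\<close>,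
  annihilating every sequence that satisfies the recurrence of that polynomial, such as \<open>z^k\<close> and
  \<open>Im z^(k+1) / Im z\<close>. Hence the two extra constraints of \<open>D_z\<close> only involve \<open>u_1\<close> and \<open>u_2\<close>,
  namely \<open>|z|^2 |u_1| \<le> 1\<close> and \<open>|2 Re z u_1 - |z|^2 u_2| \<le> 1\<close>, and the integrand becomes
  \<open>4 (Im z)^2 |\<Sum>_j u_j z^(j-1)|^2\<close>.

  Read as a triangular system, the constraints give \<open>|u_j| \<le> 4^j / |z|^2\<close> on the new domain, so
  the integral is at most a constant times \<open>(Im z)^2 |z|^(2m-2) |z|^(-4) |z|^(-2m) = (Im z)^2 / |z|^6\<close>.
  Conversely the new domain contains the box \<open>u_m \<in> [d/2, d]\<close>, \<open>|u_j| \<le> d/(4m)\<close> for \<open>j < m\<close>,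
  where \<open>d = 1 / (4 |z|^2)\<close>; there the leading term \<open>u_m z^(m-1)\<close> dominates, which gives a lower
  bound of the same order.
\<close>

definition shear :: "nat set \<Rightarrow> (nat \<Rightarrow> nat \<Rightarrow> real) \<Rightarrow> (nat \<Rightarrow> real) \<Rightarrow> nat \<Rightarrow> real" where
  "shear I a u = (\<lambda>k\<in>I. u k + (\<Sum>j\<in>{j\<in>I. k < j}. a k j * u j))"

lemma measurable_shear [measurable]:
  "finite I \<Longrightarrow> shear I a \<in> measurable (PiM I (\<lambda>_. lborel)) (PiM I (\<lambda>_. lborel))"
  unfolding shear_def
  by (intro measurable_restrict) (simp only: measurable_lborel1, auto)

lemma shear_in_space_PiM: "shear I a u \<in> space (PiM I (\<lambda>_. lborel :: real measure))"
  by (simp add: shear_def space_PiM)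

lemma shear_insert_least:
  assumes "\<forall>i\<in>I. b < i" and "x \<in> space (PiM I (\<lambda>_. lborel :: real measure))"
  shows "shear (insert b I) a (x(b := y)) = (shear I a x)(b := y + (\<Sum>j\<in>I. a b j * x j))"
proof
  fix k
  have "b \<notin> I" using assms(1) by auto
  have upd: "(\<Sum>j\<in>S. c j * (x(b := y)) j) = (\<Sum>j\<in>S. c j * x j)" if "S \<subseteq> I" for S c
    using that \<open>b \<notin> I\<close> by (intro sum.cong) auto
  show "shear (insert b I) a (x(b := y)) k = ((shear I a x)(b := y + (\<Sum>j\<in>I. a b j * x j))) k"
  proof (cases "k = b")
    case True
    have "{j\<in>insert b I. b < j} = I" using assms(1) by auto
    then show ?thesis using True upd[of I] by (simp add: shear_def)
  next
    case False
    have "{j\<in>insert b I. k < j} = {j\<in>I. k < j}" if "k \<in> I" using assms(1) that by auto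
    then show ?thesis using False upd[of "{j\<in>I. k < j}"] by (auto simp: shear_def)
  qed
qed

text \<open>Induction on \<open>I\<close>: integrate out the smallest coordinate first; in it the map is a translation.\<close>

lemma nn_integral_PiM_lborel_shear:
  assumes "finite I" and "f \<in> borel_measurable (PiM I (\<lambda>_. lborel :: real measure))"
  shows "(\<integral>\<^sup>+ u. f (shear I a u) \<partial>PiM I (\<lambda>_. lborel)) = (\<integral>\<^sup>+ t. f t \<partial>PiM I (\<lambda>_. lborel))"
  using assms
proof (induction I arbitrary: f rule: finite_linorder_min_induct)
  case empty
  show ?case by (simp add: PiM_empty shear_def nn_integral_count_space_finite)
next
  case (insert b I)
  interpret product_sigma_finite "\<lambda>_::nat. lborel :: real measure" by standard
  have "b \<notin> I" using insert.hyps(2) by auto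
  note f [measurable] = insert.prems
  define F where "F w = (\<integral>\<^sup>+ y. f (w(b := y)) \<partial>lborel)" for w
  have F [measurable]: "F \<in> borel_measurable (PiM I (\<lambda>_. lborel))"
    unfolding F_def by measurable
  have "(\<integral>\<^sup>+ u. f (shear (insert b I) a u) \<partial>PiM (insert b I) (\<lambda>_. lborel))
      = (\<integral>\<^sup>+ x. (\<integral>\<^sup>+ y. f (shear (insert b I) a (x(b := y))) \<partial>lborel) \<partial>PiM I (\<lambda>_. lborel))"
    using insert.hyps(1) \<open>b \<notin> I\<close> by (rule product_nn_integral_insert) (measurable, simp add: insert.hyps(1))
  also have "\<dots> = (\<integral>\<^sup>+ x. F (shear I a x) \<partial>PiM I (\<lambda>_. lborel))"
  proof (rule nn_integral_cong)
    fix x assume x: "x \<in> space (PiM I (\<lambda>_. lborel :: real measure))"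
    let ?w = "shear I a x" and ?c = "\<Sum>j\<in>I. a b j * x j"
    have "(\<lambda>y. f (?w(b := y))) \<in> borel_measurable lborel"
      using measurable_comp[OF measurable_component_update[OF shear_in_space_PiM \<open>b \<notin> I\<close>] f]
      by (simp add: comp_def)
    then have "(\<integral>\<^sup>+ y. f (?w(b := ?c + 1 * y)) \<partial>lborel) = (\<integral>\<^sup>+ y. f (?w(b := y)) \<partial>lborel)"
      using nn_integral_real_affine[of "\<lambda>y. f (?w(b := y))" 1 ?c] by simp
    then show "(\<integral>\<^sup>+ y. f (shear (insert b I) a (x(b := y))) \<partial>lborel) = F (shear I a x)"
      using shear_insert_least[OF insert.hyps(2) x] by (simp add: F_def add.commute)
  qed
  also have "\<dots> = (\<integral>\<^sup>+ x. F x \<partial>PiM I (\<lambda>_. lborel))"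
    by (rule insert.IH[OF F])
  also have "\<dots> = (\<integral>\<^sup>+ t. f t \<partial>PiM (insert b I) (\<lambda>_. lborel))"
    unfolding F_def using insert.hyps(1) \<open>b \<notin> I\<close> f by (intro product_nn_integral_insert[symmetric])
  finally show ?case .
qed

lemma emeasure_PiM_lborel_box:
  assumes "finite I" and "\<And>i. i \<in> I \<Longrightarrow> a i \<le> b i"
  shows "emeasure (PiM I (\<lambda>_. lborel)) (PiE I (\<lambda>i. {a i..b i})) = ennreal (\<Prod>i\<in>I. b i - a i)"
proof -
  interpret product_sigma_finite "\<lambda>_::'a. lborel :: real measure" by standard
  have "emeasure (PiM I (\<lambda>_. lborel)) (PiE I (\<lambda>i. {a i..b i})) = (\<Prod>i\<in>I. emeasure lborel {a i..b i})"
    using assms(1) by (rule emeasure_PiM) simp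
  also have "\<dots> = ennreal (\<Prod>i\<in>I. b i - a i)"
    using assms(2) by (simp add: prod_ennreal)
  finally show ?thesis .
qed

lemma sets_PiM_lborel_box: "finite I \<Longrightarrow> PiE I (\<lambda>i. {a i..b i}) \<in> sets (PiM I (\<lambda>_. lborel :: real measure))"
  by (rule sets_PiM_I_finite) auto

lemma prod_if_last:
  assumes "1 \<le> m"
  shows "(\<Prod>i\<in>{1..m}. if i = m then A else B) = A * B ^ (m - 1)"
proof -
  have "{1..m} = insert m {1..m-1}" "{1..m-1} \<inter> - {m} = {1..m-1}" using assms by auto
  then show ?thesis by (simp add: prod.If_cases)
qed

lemma emeasure_PiM_lborel_box_last:
  assumes "1 \<le> m" and "0 \<le> d" and "0 \<le> e"
  shows "emeasure (PiM {1..m} (\<lambda>_. lborel)) (PiE {1..m} (\<lambda>i. if i = m then {d / 2..d} else {- e..e}))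
       = ennreal (d / 2 * (2 * e) ^ (m - 1))"
proof -
  have "(\<lambda>i. if i = m then {d / 2..d} else {- e..e})
      = (\<lambda>i. {(if i = m then d / 2 else - e)..(if i = m then d else e)})"
    by (simp add: fun_eq_iff)
  then have "emeasure (PiM {1..m} (\<lambda>_. lborel)) (PiE {1..m} (\<lambda>i. if i = m then {d / 2..d} else {- e..e}))
      = ennreal (\<Prod>i\<in>{1..m}. (if i = m then d else e) - (if i = m then d / 2 else - e))"
    using assms(2,3) by (simp only:) (rule emeasure_PiM_lborel_box, auto)
  also have "(\<Prod>i\<in>{1..m}. (if i = m then d else e) - (if i = m then d / 2 else - e))
      = (\<Prod>i\<in>{1..m}. if i = m then d / 2 else 2 * e)"
    by (intro prod.cong) auto
  also have "\<dots> = d / 2 * (2 * e) ^ (m - 1)"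
    by (rule prod_if_last[OF assms(1)])
  finally show ?thesis .
qed

lemma nn_integral_le_mult_emeasure:
  assumes "A \<in> sets M" and "\<And>x. x \<in> space M \<Longrightarrow> f x \<le> ennreal c * indicator A x"
  shows "(\<integral>\<^sup>+ x. f x \<partial>M) \<le> ennreal c * emeasure M A"
proof -
  have "(\<integral>\<^sup>+ x. f x \<partial>M) \<le> (\<integral>\<^sup>+ x. ennreal c * indicator A x \<partial>M)"
    using assms(2) by (rule nn_integral_mono)
  also have "\<dots> = ennreal c * emeasure M A"
    using assms(1) by (rule nn_integral_cmult_indicator)
  finally show ?thesis .
qed

lemma mult_emeasure_le_nn_integral:
  assumes "A \<in> sets M" and "\<And>x. x \<in> A \<Longrightarrow> ennreal c \<le> f x"
  shows "ennreal c * emeasure M A \<le> (\<integral>\<^sup>+ x. f x \<partial>M)"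
proof -
  have "ennreal c * emeasure M A = (\<integral>\<^sup>+ x. ennreal c * indicator A x \<partial>M)"
    using assms(1) by (rule nn_integral_cmult_indicator[symmetric])
  also have "\<dots> \<le> (\<integral>\<^sup>+ x. f x \<partial>M)"
    using assms(2) by (intro nn_integral_mono) (simp split: split_indicator)
  finally show ?thesis .
qed

section \<open>Three-term shears and second-order recurrences\<close>

definition shear2 :: "real \<Rightarrow> real \<Rightarrow> nat \<Rightarrow> (nat \<Rightarrow> real) \<Rightarrow> nat \<Rightarrow> real" where
  "shear2 \<alpha> \<beta> m = shear {1..m} (\<lambda>k j. if j = Suc k then \<alpha> else if j = Suc (Suc k) then \<beta> else 0)"

lemma shear2_apply:
  assumes "k \<in> {1..m}"
  shows "shear2 \<alpha> \<beta> m u k = u k + (if Suc k \<le> m then \<alpha> * u (Suc k) else 0)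
                                  + (if Suc (Suc k) \<le> m then \<beta> * u (Suc (Suc k)) else 0)"
proof -
  have "(\<Sum>j\<in>{j\<in>{1..m}. k < j}. (if j = Suc k then \<alpha> else if j = Suc (Suc k) then \<beta> else 0) * u j)
      = (\<Sum>j\<in>{j\<in>{1..m}. k < j}. (if j = Suc k then \<alpha> * u j else 0) + (if j = Suc (Suc k) then \<beta> * u j else 0))"
    by (intro sum.cong) auto
  then show ?thesis using assms by (simp add: shear2_def shear_def sum.distrib sum.delta)
qed

definition shear2_adjoint :: "real \<Rightarrow> real \<Rightarrow> (nat \<Rightarrow> complex) \<Rightarrow> nat \<Rightarrow> complex" where
  "shear2_adjoint \<alpha> \<beta> e j = e j + (if 2 \<le> j then of_real \<alpha> * e (j - 1) else 0)
                               + (if 3 \<le> j then of_real \<beta> * e (j - 2) else 0)"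

lemma sum_shift_bounded:
  fixes f :: "nat \<Rightarrow> nat \<Rightarrow> 'a::comm_monoid_add"
  shows "(\<Sum>k=1..m. if k + d \<le> m then f (k + d) k else 0) = (\<Sum>j=1..m. if d + 1 \<le> j then f j (j - d) else 0)"
proof -
  have "(\<Sum>k=1..m. if k + d \<le> m then f (k + d) k else 0) = (\<Sum>k\<in>{k\<in>{1..m}. k + d \<le> m}. f (k + d) k)"
    by (rule sum.inter_filter[symmetric]) simp
  also have "\<dots> = (\<Sum>j\<in>{j\<in>{1..m}. d + 1 \<le> j}. f j (j - d))"
    by (rule sum.reindex_bij_witness[where i="\<lambda>j. j - d" and j="\<lambda>k. k + d"]) auto
  also have "\<dots> = (\<Sum>j=1..m. if d + 1 \<le> j then f j (j - d) else 0)"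
    by (rule sum.inter_filter) simp
  finally show ?thesis .
qed

lemma sum_shear2_mult:
  "(\<Sum>k=1..m. of_real (shear2 \<alpha> \<beta> m u k) * e k) = (\<Sum>j=1..m. of_real (u j) * shear2_adjoint \<alpha> \<beta> e j)"
proof -
  let ?f1 = "\<lambda>j k. of_real (\<alpha> * u j) * e k" and ?f2 = "\<lambda>j k. of_real (\<beta> * u j) * e k"
  have "(\<Sum>k=1..m. of_real (shear2 \<alpha> \<beta> m u k) * e k)
      = (\<Sum>k=1..m. of_real (u k) * e k + (if k + 1 \<le> m then ?f1 (k + 1) k else 0)
                    + (if k + 2 \<le> m then ?f2 (k + 2) k else 0))"
    by (intro sum.cong refl) (auto simp: shear2_apply distrib_right)
  also have "\<dots> = (\<Sum>k=1..m. of_real (u k) * e k) + (\<Sum>k=1..m. if k + 1 \<le> m then ?f1 (k + 1) k else 0)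
        + (\<Sum>k=1..m. if k + 2 \<le> m then ?f2 (k + 2) k else 0)"
    by (simp only: sum.distrib)
  also have "\<dots> = (\<Sum>j=1..m. of_real (u j) * e j) + (\<Sum>j=1..m. if 1 + 1 \<le> j then ?f1 j (j - 1) else 0)
        + (\<Sum>j=1..m. if 2 + 1 \<le> j then ?f2 j (j - 2) else 0)"
    using sum_shift_bounded[where f = ?f1 and d = 1] sum_shift_bounded[where f = ?f2 and d = 2]
    by simp
  also have "\<dots> = (\<Sum>j=1..m. of_real (u j) * shear2_adjoint \<alpha> \<beta> e j)"
    unfolding shear2_adjoint_def sum.distrib[symmetric] by (intro sum.cong refl) (auto simp: algebra_simps)
  finally show ?thesis .
qed

definition recurrent2 :: "real \<Rightarrow> real \<Rightarrow> (nat \<Rightarrow> complex) \<Rightarrow> bool" where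
  "recurrent2 \<alpha> \<beta> e \<longleftrightarrow> (\<forall>i. e (i + 2) + of_real \<alpha> * e (i + 1) + of_real \<beta> * e i = 0)"

lemma recurrent2_diff:
  "recurrent2 \<alpha> \<beta> e \<Longrightarrow> recurrent2 \<alpha> \<beta> f \<Longrightarrow> recurrent2 \<alpha> \<beta> (\<lambda>k. e k - f k)"
  unfolding recurrent2_def by (metis (no_types, lifting) diff_add_eq add_diff_add right_diff_distrib diff_self)

lemma recurrent2_Im_divide:
  assumes "recurrent2 \<alpha> \<beta> e"
  shows "recurrent2 \<alpha> \<beta> (\<lambda>k. of_real (Im (e k) / c))"
proof -
  have "Im (e (i + 2)) + \<alpha> * Im (e (i + 1)) + \<beta> * Im (e i) = 0" for i
    using arg_cong[OF assms[unfolded recurrent2_def, rule_format, of i], of Im] by simp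
  then show ?thesis
    unfolding recurrent2_def by (simp add: add_divide_distrib[symmetric] flip: of_real_mult of_real_add)
qed

text \<open>\<open>X^2 - 2 Re z X + |z|^2 = (X - z)(X - cnj z)\<close>, so \<open>z^k\<close> satisfies the recurrence.\<close>

lemma recurrent2_power: "recurrent2 (- 2 * Re z) ((cmod z)\<^sup>2) (\<lambda>k. z ^ (k + c))"
proof -
  have "of_real (2 * Re z) = z + cnj z" by (simp add: complex_add_cnj)
  moreover have "of_real ((cmod z)\<^sup>2) = z * cnj z" by (rule complex_norm_square)
  ultimately have "z\<^sup>2 - of_real (2 * Re z) * z + of_real ((cmod z)\<^sup>2) = 0"
    by (simp add: power2_eq_square algebra_simps)
  then have "z ^ (i + c) * (z\<^sup>2 - of_real (2 * Re z) * z + of_real ((cmod z)\<^sup>2)) = 0" for i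
    by simp
  then show ?thesis
    unfolding recurrent2_def by (simp add: power_add power2_eq_square algebra_simps)
qed

lemma shear2_adjoint_recurrent2:
  assumes "recurrent2 \<alpha> \<beta> e"
  shows "shear2_adjoint \<alpha> \<beta> e 2 = - of_real \<beta> * e 0"
    and "3 \<le> j \<Longrightarrow> shear2_adjoint \<alpha> \<beta> e j = 0"
proof -
  show "shear2_adjoint \<alpha> \<beta> e 2 = - of_real \<beta> * e 0"
    using assms[unfolded recurrent2_def, rule_format, of 0]
    by (simp add: shear2_adjoint_def eq_neg_iff_add_eq_0 numeral_2_eq_2)
  assume "3 \<le> j"
  then obtain i where "j = Suc (Suc (Suc i))" by (metis add.commute add_Suc le_iff_add numeral_3_eq_3 plus_nat.add_0)
  then show "shear2_adjoint \<alpha> \<beta> e j = 0"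
    using assms[unfolded recurrent2_def, rule_format, of "i + 1"]
    by (simp add: shear2_adjoint_def add.assoc)
qed

lemma shear2_adjoint_add:
  "shear2_adjoint \<alpha> \<beta> (\<lambda>k. e k + f k) j = shear2_adjoint \<alpha> \<beta> e j + shear2_adjoint \<alpha> \<beta> f j"
  by (simp add: shear2_adjoint_def algebra_simps)

lemma shear2_adjoint_of_nat_mult:
  assumes "recurrent2 \<alpha> \<beta> e" and "2 \<le> j"
  shows "shear2_adjoint \<alpha> \<beta> (\<lambda>k. of_nat k * e k) j = 2 * e j + of_real \<alpha> * e (j - 1)"
proof (cases "j = 2")
  case True
  then show ?thesis by (simp add: shear2_adjoint_def)
next
  case False
  then obtain i where j: "j = i + 3" using assms(2) by (metis add.commute le_iff_add le_neq_implies_less Suc_leI numeral_2_eq_2 numeral_3_eq_3)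
  have "e (i + 3) + of_real \<alpha> * e (i + 2) + of_real \<beta> * e (i + 1) = 0"
    using assms(1)[unfolded recurrent2_def, rule_format, of "i + 1"] by (simp add: add.assoc numeral_3_eq_3)
  moreover have "shear2_adjoint \<alpha> \<beta> (\<lambda>k. of_nat k * e k) j - (2 * e j + of_real \<alpha> * e (j - 1))
      = of_nat (i + 1) * (e (i + 3) + of_real \<alpha> * e (i + 2) + of_real \<beta> * e (i + 1))"
    by (simp add: shear2_adjoint_def j algebra_simps)
  ultimately show ?thesis by simp
qed

lemma sum_upto_two:
  fixes f :: "nat \<Rightarrow> 'a::comm_monoid_add"
  assumes "1 \<le> m" and "\<And>j. 3 \<le> j \<Longrightarrow> f j = 0"
  shows "(\<Sum>j=1..m. f j) = f 1 + (if 2 \<le> m then f 2 else 0)"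
proof -
  have "(\<Sum>j=1..m. f j) = (\<Sum>j=1..min m 2. f j)"
    using assms(2) by (intro sum.mono_neutral_right) auto
  also have "\<dots> = f 1 + (if 2 \<le> m then f 2 else 0)"
  proof (cases "m = 1")
    case False
    then have "min m 2 = 2" "{1..2::nat} = {1, 2}" using assms(1) by auto
    then show ?thesis using False assms(1) by simp
  qed simp
  finally show ?thesis .
qed

section \<open>The change of variables adapted to z\<close>

abbreviation char_shear :: "complex \<Rightarrow> nat \<Rightarrow> (nat \<Rightarrow> real) \<Rightarrow> nat \<Rightarrow> real" where
  "char_shear z m \<equiv> shear2 (- 2 * Re z) ((cmod z)\<^sup>2) m"

abbreviation char_adjoint :: "complex \<Rightarrow> (nat \<Rightarrow> complex) \<Rightarrow> nat \<Rightarrow> complex" where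
  "char_adjoint z \<equiv> shear2_adjoint (- 2 * Re z) ((cmod z)\<^sup>2)"

lemma char_adjoint_power_minus_Im_ratio:
  assumes "Im z \<noteq> 0" and "1 \<le> j"
  shows "char_adjoint z (\<lambda>k. z ^ k - of_real (Im (z ^ (k + 1)) / Im z)) j = (if j = 1 then - cnj z else 0)"
proof -
  let ?e = "\<lambda>k. z ^ k - of_real (Im (z ^ (k + 1)) / Im z)"
  have rec: "recurrent2 (- 2 * Re z) ((cmod z)\<^sup>2) ?e"
    using recurrent2_diff[OF recurrent2_power[of z 0] recurrent2_Im_divide[OF recurrent2_power[of z 1]]]
    unfolding add_0_right .
  have "?e 0 = 0" using assms(1) by simp
  moreover have "?e 1 = - cnj z" using assms(1) by (simp add: power2_eq_square complex_eq_iff)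
  ultimately show ?thesis
    using shear2_adjoint_recurrent2[OF rec] assms(2)
    by (cases "j \<le> 2") (auto simp: shear2_adjoint_def le_Suc_eq numeral_2_eq_2)
qed

lemma char_adjoint_of_nat_mult_power:
  assumes "1 \<le> j"
  shows "char_adjoint z (\<lambda>k. of_nat k * z ^ k) j = \<i> * of_real (2 * Im z) * z ^ (j - 1) + (if j = 1 then cnj z else 0)"
proof (cases "j = 1")
  case True
  then show ?thesis by (simp add: shear2_adjoint_def complex_eq_iff)
next
  case False
  then have "char_adjoint z (\<lambda>k. of_nat k * z ^ k) j = 2 * z ^ j - of_real (2 * Re z) * z ^ (j - 1)"
    using shear2_adjoint_of_nat_mult[OF recurrent2_power[of z 0, unfolded add_0_right]] assms by simp
  also have "\<dots> = (2 * z - of_real (2 * Re z)) * z ^ (j - 1)"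
    using assms by (simp add: algebra_simps power_eq_if)
  also have "2 * z - of_real (2 * Re z) = \<i> * of_real (2 * Im z)"
    by (simp add: complex_eq_iff)
  finally show ?thesis using False by simp
qed

lemma sum_char_shear_mult_power:
  assumes "1 \<le> m"
  shows "(\<Sum>k=1..m. of_real (char_shear z m u k) * z ^ (k + 1))
       = of_real (u 1) * z\<^sup>2 - (if 2 \<le> m then of_real (u 2 * (cmod z)\<^sup>2) * z else 0)"
proof -
  let ?E = "char_adjoint z (\<lambda>k. z ^ (k + 1))"
  have "(\<Sum>k=1..m. of_real (char_shear z m u k) * z ^ (k + 1))
      = (\<Sum>j=1..m. of_real (u j) * ?E j)"
    by (rule sum_shear2_mult)
  also have "\<dots> = of_real (u 1) * ?E 1 + (if 2 \<le> m then of_real (u 2) * ?E 2 else 0)"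
    by (rule sum_upto_two[OF assms]) (use shear2_adjoint_recurrent2(2)[OF recurrent2_power[of z 1]] in simp)
  also have "?E 1 = z\<^sup>2" by (simp add: shear2_adjoint_def power2_eq_square)
  also have "?E 2 = - of_real ((cmod z)\<^sup>2) * z"
    using shear2_adjoint_recurrent2(1)[OF recurrent2_power[of z 1]] by simp
  finally show ?thesis by simp
qed

lemma sum_char_shear_mult_power_minus_Im_ratio:
  assumes "Im z \<noteq> 0" and "1 \<le> m"
  shows "z * (\<Sum>k=1..m. of_real (char_shear z m u k) * (z ^ k - of_real (Im (z ^ (k + 1)) / Im z)))
       = - of_real ((cmod z)\<^sup>2 * u 1)"
proof -
  let ?E = "char_adjoint z (\<lambda>k. z ^ k - of_real (Im (z ^ (k + 1)) / Im z))"
  have "(\<Sum>k=1..m. of_real (char_shear z m u k) * (z ^ k - of_real (Im (z ^ (k + 1)) / Im z)))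
      = (\<Sum>j=1..m. of_real (u j) * ?E j)"
    by (rule sum_shear2_mult)
  also have "\<dots> = (\<Sum>j=1..m. of_real (u j) * (if j = 1 then - cnj z else 0))"
    using char_adjoint_power_minus_Im_ratio[OF assms(1)] by (intro sum.cong) auto
  also have "\<dots> = - of_real (u 1) * cnj z"
    by (subst sum_upto_two[OF assms(2)]) auto
  finally show ?thesis using complex_norm_square[of z] by (simp add: algebra_simps)
qed

lemma sum_char_shear_mult_psi_coeff:
  assumes "Im z \<noteq> 0"
  shows "(\<Sum>k=1..m. of_real (char_shear z m u k) * (of_nat (k + 1) * z ^ k - of_real (Im (z ^ (k + 1)) / Im z)))
       = \<i> * of_real (2 * Im z) * (\<Sum>j=1..m. of_real (u j) * z ^ (j - 1))"
proof -
  have split: "(\<lambda>k. of_nat (k + 1) * z ^ k - of_real (Im (z ^ (k + 1)) / Im z))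
      = (\<lambda>k. (z ^ k - of_real (Im (z ^ (k + 1)) / Im z)) + of_nat k * z ^ k)"
    by (simp add: algebra_simps)
  have "char_adjoint z (\<lambda>k. of_nat (k + 1) * z ^ k - of_real (Im (z ^ (k + 1)) / Im z)) j
      = \<i> * of_real (2 * Im z) * z ^ (j - 1)" if "j \<in> {1..m}" for j
    using that char_adjoint_power_minus_Im_ratio[OF assms, of j] char_adjoint_of_nat_mult_power[of j z]
    unfolding split shear2_adjoint_add by simp
  then show ?thesis
    unfolding sum_shear2_mult sum_distrib_left by (intro sum.cong) (simp_all add: ac_simps)
qed

lemma Im_sum_char_shear_mult_power:
  assumes "1 \<le> m"
  shows "(\<Sum>k=1..m. char_shear z m u k * Im (z ^ (k + 1)))
       = Im z * (2 * Re z * u 1 - (if 2 \<le> m then (cmod z)\<^sup>2 * u 2 else 0))"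
proof -
  have "(\<Sum>k=1..m. char_shear z m u k * Im (z ^ (k + 1)))
      = Im (\<Sum>k=1..m. of_real (char_shear z m u k) * z ^ (k + 1))"
    by (simp add: Im_sum)
  also have "\<dots> = Im (of_real (u 1) * z\<^sup>2 - (if 2 \<le> m then of_real (u 2 * (cmod z)\<^sup>2) * z else 0))"
    by (simp only: sum_char_shear_mult_power[OF assms])
  also have "\<dots> = Im z * (2 * Re z * u 1 - (if 2 \<le> m then (cmod z)\<^sup>2 * u 2 else 0))"
    by (cases "2 \<le> m") (simp_all add: Im_power2 algebra_simps)
  finally show ?thesis .
qed

lemma char_shear_mem_Dz_iff:
  assumes "Im z \<noteq> 0" and "1 \<le> m"
  shows "char_shear z m u \<in> Dz (Suc m) z \<longleftrightarrow>
    (\<forall>k\<in>{1..m}. \<bar>char_shear z m u k\<bar> \<le> 1) \<and> (cmod z)\<^sup>2 * \<bar>u 1\<bar> \<le> 1 \<and>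
    \<bar>2 * Re z * u 1 - (if 2 \<le> m then (cmod z)\<^sup>2 * u 2 else 0)\<bar> \<le> 1"
proof -
  have mem: "char_shear z m u \<in> PiE {1..m} (\<lambda>_. UNIV)" by (simp add: shear2_def shear_def)
  have norm_eq: "cmod (z * (\<Sum>k=1..m. of_real (char_shear z m u k) *
                 (z ^ k - of_real (Im (z ^ (k + 1)) / Im z)))) = (cmod z)\<^sup>2 * \<bar>u 1\<bar>"
    unfolding sum_char_shear_mult_power_minus_Im_ratio[OF assms] norm_minus_cancel norm_of_real
    by (simp add: abs_mult)
  have Im_eq: "(1 / Im z) * (\<Sum>k=1..m. char_shear z m u k * Im (z ^ (k + 1)))
       = 2 * Re z * u 1 - (if 2 \<le> m then (cmod z)\<^sup>2 * u 2 else 0)"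
    unfolding Im_sum_char_shear_mult_power[OF assms(2)] using assms(1) by simp
  show ?thesis unfolding Dz_def mem_Collect_eq diff_Suc_1 norm_eq Im_eq using mem by simp
qed

definition psi_integrand :: "nat \<Rightarrow> complex \<Rightarrow> (nat \<Rightarrow> real) \<Rightarrow> real" where
  "psi_integrand n z t = (cmod (\<Sum>k=1..n-1. complex_of_real (t k) *
              (of_nat (k + 1) * z ^ k - complex_of_real (Im (z ^ (k + 1)) / Im z)))) ^ 2"

lemma psi_integrand_char_shear:
  assumes "Im z \<noteq> 0"
  shows "psi_integrand (Suc m) z (char_shear z m u)
       = 4 * (Im z)\<^sup>2 * (cmod (\<Sum>j=1..m. of_real (u j) * z ^ (j - 1)))\<^sup>2"
  unfolding psi_integrand_def diff_Suc_1 sum_char_shear_mult_psi_coeff[OF assms]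
  by (simp add: norm_mult power_mult_distrib)

section \<open>The transformed domain\<close>

lemma one_add_four_powers_le:
  assumes "1 \<le> k"
  shows "1 + 4 ^ (k - 2) + 2 * 4 ^ (k - 1) \<le> (4::real) ^ k"
proof (cases "k = 1")
  case False
  then have "2 \<le> k" using assms by simp
  then obtain i where "k = i + 2" by (metis add.commute le_iff_add)
  moreover have "(1::real) \<le> 7 * 4 ^ i" using one_le_power[of "4::real" i] by linarith
  ultimately show ?thesis by (simp add: power_add)
qed simp

text \<open>For \<open>j = 1\<close> the index \<open>j - 2\<close> truncates to \<open>0\<close>, so with \<open>w 0 = 0\<close> the first two
  inequalities read \<open>|b w_1| \<le> 1\<close> and \<open>|a w_1 + b w_2| \<le> 1\<close>.\<close>

lemma abs_le_four_power_of_three_term_bound: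
  fixes w :: "nat \<Rightarrow> real"
  assumes "w 0 = 0" and "1 \<le> b" and "\<bar>a\<bar> \<le> 2 * b"
    and bound: "\<forall>j\<in>{1..m}. \<bar>w (j - 2) + a * w (j - 1) + b * w j\<bar> \<le> 1"
  shows "k \<le> m \<Longrightarrow> \<bar>w k\<bar> \<le> 4 ^ k / b"
proof (induction k rule: less_induct)
  case (less k)
  show ?case
  proof (cases "k = 0")
    case True
    then show ?thesis using assms(1,2) by simp
  next
    case False
    have IH2: "\<bar>w (k - 2)\<bar> \<le> 4 ^ (k - 2) / b" and IH1: "\<bar>w (k - 1)\<bar> \<le> 4 ^ (k - 1) / b"
      using less False by auto
    have "(4::real) ^ (k - 2) / b \<le> 4 ^ (k - 2)"
      using assms(2) by (simp add: divide_le_eq mult_le_cancel_left1)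
    then have w2: "\<bar>w (k - 2)\<bar> \<le> 4 ^ (k - 2)" using IH2 by linarith
    have "\<bar>a\<bar> * \<bar>w (k - 1)\<bar> \<le> (2 * b) * (4 ^ (k - 1) / b)"
      using assms(3) IH1 by (intro mult_mono) auto
    then have w1: "\<bar>a * w (k - 1)\<bar> \<le> 2 * 4 ^ (k - 1)" using assms(2) by (simp add: abs_mult)
    have "\<bar>w (k - 2) + a * w (k - 1) + b * w k\<bar> \<le> 1"
      using bound less.prems False by auto
    then have "\<bar>b * w k\<bar> \<le> 1 + \<bar>w (k - 2)\<bar> + \<bar>a * w (k - 1)\<bar>"
      using abs_triangle_ineq4[of "w (k - 2) + a * w (k - 1) + b * w k" "w (k - 2) + a * w (k - 1)"]
        abs_triangle_ineq[of "w (k - 2)" "a * w (k - 1)"]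
      by simp
    then have "b * \<bar>w k\<bar> \<le> 1 + 4 ^ (k - 2) + 2 * 4 ^ (k - 1)"
      using assms(2) w1 w2 by (simp add: abs_mult)
    also have "\<dots> \<le> 4 ^ k"
      using False by (intro one_add_four_powers_le) simp
    finally show ?thesis using assms(2) by (simp add: field_simps)
  qed
qed

lemma abs_Re_le_norm_power2:
  assumes "1 \<le> cmod z"
  shows "\<bar>Re z\<bar> \<le> (cmod z)\<^sup>2"
  using assms abs_Re_le_cmod[of z] mult_left_mono[of 1 "cmod z" "cmod z"] by (simp add: power2_eq_square)

lemma char_shear_mem_Dz_imp_abs_le:
  assumes "Im z \<noteq> 0" and "1 \<le> cmod z" and "1 \<le> m"
    and "char_shear z m u \<in> Dz (Suc m) z" and "j \<in> {1..m}"
  shows "\<bar>u j\<bar> \<le> 4 ^ j / (cmod z)\<^sup>2"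
proof -
  define w where "w k = (if k = 0 then 0 else u k)" for k
  have Dz: "\<forall>k\<in>{1..m}. \<bar>char_shear z m u k\<bar> \<le> 1" "(cmod z)\<^sup>2 * \<bar>u 1\<bar> \<le> 1"
    "\<bar>2 * Re z * u 1 - (if 2 \<le> m then (cmod z)\<^sup>2 * u 2 else 0)\<bar> \<le> 1"
    using assms(4) unfolding char_shear_mem_Dz_iff[OF assms(1,3)] by auto
  have three: "\<bar>w (i - 2) + (- 2 * Re z) * w (i - 1) + (cmod z)\<^sup>2 * w i\<bar> \<le> 1"
    if i: "i \<in> {1..m}" for i
  proof -
    consider "i = 1" | "i = 2" | "3 \<le> i" using i by force
    then show ?thesis
    proof cases
      case 1
      then show ?thesis using Dz(2) by (simp add: w_def abs_mult)
    next
      case 2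
      then show ?thesis using i using Dz(3) by (simp add: w_def abs_minus_commute)
    next
      case 3
      then have "i - 2 \<in> {1..m}" "Suc (i - 2) = i - 1" "Suc (Suc (i - 2)) = i" using i by auto
      then have "char_shear z m u (i - 2) = w (i - 2) + (- 2 * Re z) * w (i - 1) + (cmod z)\<^sup>2 * w i"
        using i 3 by (simp add: shear2_apply w_def)
      moreover have "\<bar>char_shear z m u (i - 2)\<bar> \<le> 1" using Dz(1) \<open>i - 2 \<in> {1..m}\<close> by blast
      ultimately show ?thesis by simp
    qed
  qed
  then have "\<forall>i\<in>{1..m}. \<bar>w (i - 2) + (- 2 * Re z) * w (i - 1) + (cmod z)\<^sup>2 * w i\<bar> \<le> 1" by blast
  moreover have "1 \<le> (cmod z)\<^sup>2" "\<bar>- 2 * Re z\<bar> \<le> 2 * (cmod z)\<^sup>2"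
    using assms(2) abs_Re_le_norm_power2[OF assms(2)] by (auto simp: one_le_power)
  moreover have "w 0 = 0" by (simp add: w_def)
  ultimately have "\<bar>w j\<bar> \<le> 4 ^ j / (cmod z)\<^sup>2"
    using abs_le_four_power_of_three_term_bound[of w "(cmod z)\<^sup>2" "- 2 * Re z" m j] assms(5) by simp
  then show ?thesis using assms(5) by (simp add: w_def)
qed

lemma abs_shear2_le:
  assumes "\<forall>j\<in>{1..m}. \<bar>u j\<bar> \<le> d" and "k \<in> {1..m}"
  shows "\<bar>shear2 \<alpha> \<beta> m u k\<bar> \<le> (1 + \<bar>\<alpha>\<bar> + \<bar>\<beta>\<bar>) * d"
proof -
  have "0 \<le> d" using assms by (meson abs_ge_zero order_trans)
  have if_le: "\<bar>(if j \<le> m then c * u j else 0)\<bar> \<le> \<bar>c\<bar> * d" if "1 \<le> j" for c j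
    using assms(1) that \<open>0 \<le> d\<close> by (auto simp: abs_mult intro: mult_left_mono)
  let ?A = "if Suc k \<le> m then \<alpha> * u (Suc k) else 0"
  let ?B = "if Suc (Suc k) \<le> m then \<beta> * u (Suc (Suc k)) else 0"
  have "\<bar>?A\<bar> \<le> \<bar>\<alpha>\<bar> * d" "\<bar>?B\<bar> \<le> \<bar>\<beta>\<bar> * d" "\<bar>u k\<bar> \<le> d"
    using if_le[of "Suc k" \<alpha>] if_le[of "Suc (Suc k)" \<beta>] assms by auto
  moreover have "\<bar>u k + ?A + ?B\<bar> \<le> \<bar>u k\<bar> + \<bar>?A\<bar> + \<bar>?B\<bar>"
    using abs_triangle_ineq[of "u k + ?A" ?B] abs_triangle_ineq[of "u k" ?A] by linarith
  ultimately show ?thesis unfolding shear2_apply[OF assms(2)] distrib_right by linarith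
qed

lemma char_shear_mem_Dz_of_abs_le:
  assumes "Im z \<noteq> 0" and "1 \<le> cmod z" and "1 \<le> m"
    and small: "\<forall>j\<in>{1..m}. \<bar>u j\<bar> \<le> 1 / (4 * (cmod z)\<^sup>2)"
  shows "char_shear z m u \<in> Dz (Suc m) z"
proof -
  define p where "p = (cmod z)\<^sup>2"
  have "1 \<le> p" "\<bar>Re z\<bar> \<le> p" unfolding p_def using assms(2) abs_Re_le_norm_power2 by (auto simp: one_le_power)
  define d where "d = 1 / (4 * p)"
  have "0 \<le> d" "p * d = 1 / 4" using \<open>1 \<le> p\<close> by (auto simp: d_def)
  have u: "\<bar>u j\<bar> \<le> d" if "j \<in> {1..m}" for j using small that by (simp add: d_def p_def)
  have "(1 + \<bar>- 2 * Re z\<bar> + \<bar>p\<bar>) * d \<le> (4 * p) * d"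
    using \<open>1 \<le> p\<close> \<open>\<bar>Re z\<bar> \<le> p\<close> \<open>0 \<le> d\<close> by (intro mult_right_mono) auto
  have A: "\<forall>k\<in>{1..m}. \<bar>shear2 (- 2 * Re z) p m u k\<bar> \<le> 1"
  proof
    fix k assume "k \<in> {1..m}"
    then have "\<bar>shear2 (- 2 * Re z) p m u k\<bar> \<le> (1 + \<bar>- 2 * Re z\<bar> + \<bar>p\<bar>) * d"
      using u by (intro abs_shear2_le) auto
    with \<open>(1 + \<bar>- 2 * Re z\<bar> + \<bar>p\<bar>) * d \<le> (4 * p) * d\<close> \<open>p * d = 1 / 4\<close>
    show "\<bar>shear2 (- 2 * Re z) p m u k\<bar> \<le> 1" by linarith
  qed
  have B: "p * \<bar>u 1\<bar> \<le> 1"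
    using mult_left_mono[OF u[of 1], of p] \<open>1 \<le> p\<close> \<open>p * d = 1 / 4\<close> assms(3) by simp
  have C: "\<bar>2 * Re z * u 1 - (if 2 \<le> m then p * u 2 else 0)\<bar> \<le> 1"
  proof -
    have "\<bar>2 * Re z * u 1\<bar> \<le> 2 * p * d"
      using mult_mono[OF \<open>\<bar>Re z\<bar> \<le> p\<close> u[of 1]] \<open>1 \<le> p\<close> assms(3) by (simp add: abs_mult)
    moreover have "\<bar>if 2 \<le> m then p * u 2 else 0\<bar> \<le> p * d"
      using mult_left_mono[OF u[of 2]] \<open>1 \<le> p\<close> \<open>0 \<le> d\<close> by (auto simp: abs_mult)
    ultimately show ?thesis
      using \<open>p * d = 1 / 4\<close> abs_triangle_ineq4[of "2 * Re z * u 1" "if 2 \<le> m then p * u 2 else 0"]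
      by linarith
  qed
  show ?thesis
    unfolding char_shear_mem_Dz_iff[OF assms(1,3)] using A B C unfolding p_def by (intro conjI)
qed

lemma norm_sum_of_real_mult_power_le:
  fixes z :: complex
  assumes "1 \<le> cmod z" and "\<forall>j\<in>{1..m}. \<bar>u j\<bar> \<le> B"
  shows "cmod (\<Sum>j=1..m. of_real (u j) * z ^ (j - 1)) \<le> real m * B * cmod z ^ (m - 1)"
proof -
  have "cmod (\<Sum>j=1..m. of_real (u j) * z ^ (j - 1)) \<le> (\<Sum>j=1..m. cmod (of_real (u j) * z ^ (j - 1)))"
    by (rule norm_sum)
  also have "\<dots> \<le> (\<Sum>j=1..m. B * cmod z ^ (m - 1))"
  proof (rule sum_mono)
    fix j assume j: "j \<in> {1..m}"
    have "cmod z ^ (j - 1) \<le> cmod z ^ (m - 1)" using j assms(1) by (intro power_increasing) auto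
    moreover have "\<bar>u j\<bar> \<le> B" using assms(2) j by blast
    ultimately have "\<bar>u j\<bar> * cmod z ^ (j - 1) \<le> B * cmod z ^ (m - 1)"
      by (intro mult_mono) auto
    then show "cmod (of_real (u j) * z ^ (j - 1)) \<le> B * cmod z ^ (m - 1)"
      by (simp add: norm_mult norm_power)
  qed
  finally show ?thesis by simp
qed

lemma norm_sum_of_real_mult_power_ge:
  fixes z :: complex
  assumes "1 \<le> cmod z" and "1 \<le> m" and "0 \<le> d"
    and "d / 2 \<le> \<bar>u m\<bar>" and "\<forall>j\<in>{1..m-1}. \<bar>u j\<bar> \<le> d / (4 * m)"
  shows "d * cmod z ^ (m - 1) / 4 \<le> cmod (\<Sum>j=1..m. of_real (u j) * z ^ (j - 1))"
proof -
  define lower where "lower = (\<Sum>j=1..m-1. of_real (u j) * z ^ (j - 1))"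
  define top where "top = complex_of_real (u m) * z ^ (m - 1)"
  have "(\<Sum>j=1..m. of_real (u j) * z ^ (j - 1)) = lower + top"
    using assms(2) unfolding lower_def top_def by (cases m) (simp_all add: sum.cl_ivl_Suc)
  moreover have "cmod lower \<le> d / 4 * cmod z ^ (m - 1)"
  proof -
    have "cmod lower \<le> real (m - 1) * (d / (4 * m)) * cmod z ^ (m - 1 - 1)"
      unfolding lower_def by (rule norm_sum_of_real_mult_power_le[OF assms(1,5)])
    also have "\<dots> \<le> real m * (d / (4 * m)) * cmod z ^ (m - 1)"
      using assms(1,3) by (intro mult_mono power_increasing) auto
    also have "\<dots> = d / 4 * cmod z ^ (m - 1)" using assms(2) by simp
    finally show ?thesis .
  qed
  moreover have "d / 2 * cmod z ^ (m - 1) \<le> cmod top"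
    using mult_right_mono[OF assms(4), of "cmod z ^ (m - 1)"] unfolding top_def
    by (simp add: norm_mult norm_power)
  moreover have "cmod top \<le> cmod (lower + top) + cmod lower"
    using norm_triangle_ineq[of "lower + top" "- lower"] by simp
  ultimately show ?thesis by simp
qed

lemma char_shear_mem_Dz_of_lower_box:
  assumes "Im z \<noteq> 0" and "1 \<le> cmod z" and "1 \<le> m" and d: "d = 1 / (4 * (cmod z)\<^sup>2)"
    and box: "u \<in> PiE {1..m} (\<lambda>i. if i = m then {d / 2..d} else {- (d / (4 * real m))..d / (4 * real m)})"
  shows "char_shear z m u \<in> Dz (Suc m) z"
    and "d * cmod z ^ (m - 1) / 4 \<le> cmod (\<Sum>j=1..m. of_real (u j) * z ^ (j - 1))"
proof -
  have "0 < cmod z" using assms(2) by linarith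
  then have "0 < d" unfolding d by simp
  have "d / (4 * real m) \<le> d" using \<open>0 < d\<close> assms(3) by (simp add: divide_le_eq mult_le_cancel_left1)
  have u: "(if j = m then d / 2 \<le> u j \<and> u j \<le> d else \<bar>u j\<bar> \<le> d / (4 * real m))" if "j \<in> {1..m}" for j
    using PiE_mem[OF box that] by (cases "j = m") (auto simp: abs_le_iff)
  have "\<bar>u j\<bar> \<le> d" if "j \<in> {1..m}" for j
    using u[OF that] \<open>0 < d\<close> \<open>d / (4 * real m) \<le> d\<close> by (auto split: if_splits)
  then show "char_shear z m u \<in> Dz (Suc m) z"
    using char_shear_mem_Dz_of_abs_le[OF assms(1-3)] unfolding d by blast
  have "\<bar>u j\<bar> \<le> d / (4 * real m)" if "j \<in> {1..m-1}" for j
    using u[of j] that by auto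
  moreover have "d / 2 \<le> \<bar>u m\<bar>" using u[of m] assms(3) by auto
  ultimately show "d * cmod z ^ (m - 1) / 4 \<le> cmod (\<Sum>j=1..m. of_real (u j) * z ^ (j - 1))"
    using norm_sum_of_real_mult_power_ge[OF assms(2,3)] \<open>0 < d\<close> by auto
qed

section \<open>Bounds on psi\<close>

lemma Dz_in_sets: "Dz n z \<in> sets (cube_measure n)"
proof -
  have "Dz n z = {t \<in> space (cube_measure n). (\<forall>k\<in>{1..n-1}. \<bar>t k\<bar> \<le> 1) \<and>
      cmod (z * (\<Sum>k=1..n-1. complex_of_real (t k) *
                 (z ^ k - complex_of_real (Im (z ^ (k + 1)) / Im z)))) \<le> 1 \<and>
      \<bar>(1 / Im z) * (\<Sum>k=1..n-1. t k * Im (z ^ (k + 1)))\<bar> \<le> 1}"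
    unfolding Dz_def cube_measure_def by (simp add: space_PiM)
  also have "\<dots> \<in> sets (cube_measure n)"
    unfolding cube_measure_def by measurable
  finally show ?thesis .
qed

lemma borel_measurable_psi_integrand: "psi_integrand n z \<in> borel_measurable (cube_measure n)"
  unfolding psi_integrand_def cube_measure_def by measurable

lemma borel_measurable_indicator_Dz_psi_integrand:
  "(\<lambda>t. indicator (Dz n z) t * psi_integrand n z t) \<in> borel_measurable (cube_measure n)"
  using borel_measurable_indicator[OF Dz_in_sets] borel_measurable_psi_integrand
  by (rule borel_measurable_times)

lemma nn_integral_psi_char_shear:
  assumes "Im z \<noteq> 0"
  shows "(\<integral>\<^sup>+ t. indicator (Dz (Suc m) z) t * psi_integrand (Suc m) z t \<partial>cube_measure (Suc m))
       = (\<integral>\<^sup>+ u. indicator (Dz (Suc m) z) (char_shear z m u)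
                  * (4 * (Im z)\<^sup>2 * (cmod (\<Sum>j=1..m. of_real (u j) * z ^ (j - 1)))\<^sup>2)
            \<partial>PiM {1..m} (\<lambda>_. lborel))"
proof -
  have "(\<lambda>t. ennreal (indicator (Dz (Suc m) z) t * psi_integrand (Suc m) z t))
      \<in> borel_measurable (PiM {1..m} (\<lambda>_. lborel))"
    using borel_measurable_indicator_Dz_psi_integrand[of "Suc m" z] by (simp add: cube_measure_def)
  then have "(\<integral>\<^sup>+ t. indicator (Dz (Suc m) z) t * psi_integrand (Suc m) z t \<partial>PiM {1..m} (\<lambda>_. lborel))
      = (\<integral>\<^sup>+ u. indicator (Dz (Suc m) z) (char_shear z m u) * psi_integrand (Suc m) z (char_shear z m u)
            \<partial>PiM {1..m} (\<lambda>_. lborel))"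
    unfolding shear2_def by (subst nn_integral_PiM_lborel_shear) simp_all
  then show ?thesis unfolding psi_integrand_char_shear[OF assms] by (simp add: cube_measure_def)
qed

definition psi_upper_const :: "nat \<Rightarrow> real" where
  "psi_upper_const m = 4 * (real m)\<^sup>2 * (4 ^ m)\<^sup>2 * (2 * 4 ^ m) ^ m"

definition psi_lower_const :: "nat \<Rightarrow> real" where
  "psi_lower_const m = 1 / (512 * (8 * real m) ^ (m - 1))"

lemma psi_upper_const_arith:
  fixes r Y :: real
  assumes "r \<noteq> 0" and "1 \<le> m"
  shows "4 * Y\<^sup>2 * (real m * (4 ^ m / r\<^sup>2) * r ^ (m - 1))\<^sup>2 * (2 * 4 ^ m / r\<^sup>2) ^ m
       = psi_upper_const m * Y\<^sup>2 / r ^ 6"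
proof -
  obtain k where m: "m = Suc k" using assms(2) by (cases m) auto
  define A :: real where "A = 4 ^ m"
  define B :: real where "B = (2 * 4 ^ m) ^ m"
  have "(2 * 4 ^ m / r\<^sup>2) ^ m = B / (r\<^sup>2 * (r ^ k)\<^sup>2)"
    unfolding B_def m power_divide by (simp add: power_mult[symmetric] mult.commute)
  moreover have "4 * Y\<^sup>2 * (real m * (A / r\<^sup>2) * r ^ k)\<^sup>2 * (B / (r\<^sup>2 * (r ^ k)\<^sup>2))
      = 4 * (real m)\<^sup>2 * A\<^sup>2 * B * Y\<^sup>2 / r ^ 6"
    using assms(1) by (simp add: field_simps power2_eq_square eval_nat_numeral)
  ultimately show ?thesis unfolding psi_upper_const_def A_def B_def m by simp
qed

lemma psi_lower_const_arith:
  fixes r Y :: real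
  assumes "r \<noteq> 0" and "1 \<le> m"
  shows "4 * Y\<^sup>2 * (1 / (4 * r\<^sup>2) * r ^ (m - 1) / 4)\<^sup>2
           * (1 / (4 * r\<^sup>2) / 2 * (2 * (1 / (4 * r\<^sup>2) / (4 * real m))) ^ (m - 1))
       = psi_lower_const m * Y\<^sup>2 / r ^ 6"
proof -
  obtain k where m: "m = Suc k" using assms(2) by (cases m) auto
  have "2 * (1 / (4 * r\<^sup>2) / (4 * real m)) = 1 / ((8 * real m) * r\<^sup>2)"
    using assms by (simp add: field_simps)
  then have "(2 * (1 / (4 * r\<^sup>2) / (4 * real m))) ^ k = 1 / ((8 * real m) ^ k * (r ^ k)\<^sup>2)"
    by (simp add: power_one_over power_mult_distrib power_mult[symmetric] mult.commute)
  moreover have "4 * Y\<^sup>2 * (1 / (4 * r\<^sup>2) * r ^ k / 4)\<^sup>2 * (1 / (4 * r\<^sup>2) / 2 * (1 / ((8 * real m) ^ k * (r ^ k)\<^sup>2)))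
      = 1 / (512 * (8 * real m) ^ k) * Y\<^sup>2 / r ^ 6"
    using assms by (simp add: field_simps power2_eq_square eval_nat_numeral)
  ultimately show ?thesis unfolding psi_lower_const_def m by simp
qed

lemma nn_integral_psi_le:
  assumes "Im z \<noteq> 0" and "1 \<le> cmod z" and "1 \<le> m"
  shows "(\<integral>\<^sup>+ t. indicator (Dz (Suc m) z) t * psi_integrand (Suc m) z t \<partial>cube_measure (Suc m))
       \<le> ennreal (psi_upper_const m * (Im z)\<^sup>2 / cmod z ^ 6)"
proof -
  define B :: real where "B = 4 ^ m / (cmod z)\<^sup>2"
  define C where "C = 4 * (Im z)\<^sup>2 * (real m * B * cmod z ^ (m - 1))\<^sup>2"
  define M where "M = PiM {1..m} (\<lambda>_. lborel :: real measure)"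
  define box where "box = PiE {1..m} (\<lambda>_::nat. {- B..B})"
  have "z \<noteq> 0" using assms(2) by auto
  have "ennreal (indicator (Dz (Suc m) z) (char_shear z m u)
          * (4 * (Im z)\<^sup>2 * (cmod (\<Sum>j=1..m. of_real (u j) * z ^ (j - 1)))\<^sup>2))
        \<le> ennreal C * indicator box u" if "u \<in> space M" for u
  proof (cases "char_shear z m u \<in> Dz (Suc m) z")
    case True
    have u: "\<forall>j\<in>{1..m}. \<bar>u j\<bar> \<le> B"
    proof
      fix j assume j: "j \<in> {1..m}"
      have "\<bar>u j\<bar> \<le> 4 ^ j / (cmod z)\<^sup>2" using char_shear_mem_Dz_imp_abs_le[OF assms True j] .
      also have "\<dots> \<le> B" unfolding B_def using j assms(2) by (intro divide_right_mono power_increasing) auto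
      finally show "\<bar>u j\<bar> \<le> B" .
    qed
    then have "u \<in> box" using that unfolding box_def M_def by (auto simp: space_PiM PiE_iff abs_le_iff)
    moreover have "4 * (Im z)\<^sup>2 * (cmod (\<Sum>j=1..m. of_real (u j) * z ^ (j - 1)))\<^sup>2 \<le> C"
      unfolding C_def using norm_sum_of_real_mult_power_le[OF assms(2) u] by (intro mult_left_mono power_mono) auto
    ultimately show ?thesis using True by (simp add: ennreal_leI)
  qed simp
  then have "(\<integral>\<^sup>+ t. indicator (Dz (Suc m) z) t * psi_integrand (Suc m) z t \<partial>cube_measure (Suc m))
      \<le> ennreal C * emeasure M box"
    unfolding nn_integral_psi_char_shear[OF assms(1)] M_def
    by (intro nn_integral_le_mult_emeasure) (simp_all add: box_def sets_PiM_lborel_box)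
  also have "emeasure M box = ennreal ((2 * B) ^ m)"
    unfolding M_def box_def using assms(2) by (subst emeasure_PiM_lborel_box) (auto simp: B_def)
  also have "ennreal C * ennreal ((2 * B) ^ m) = ennreal (psi_upper_const m * (Im z)\<^sup>2 / cmod z ^ 6)"
    using psi_upper_const_arith[of "cmod z" m "Im z"] assms(2,3) \<open>z \<noteq> 0\<close>
    by (simp add: C_def B_def ennreal_mult'[symmetric] power_mult_distrib)
  finally show ?thesis .
qed

lemma nn_integral_psi_ge:
  assumes "Im z \<noteq> 0" and "1 \<le> cmod z" and "1 \<le> m"
  shows "ennreal (psi_lower_const m * (Im z)\<^sup>2 / cmod z ^ 6)
       \<le> (\<integral>\<^sup>+ t. indicator (Dz (Suc m) z) t * psi_integrand (Suc m) z t \<partial>cube_measure (Suc m))"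
proof -
  define d where "d = 1 / (4 * (cmod z)\<^sup>2)"
  define e where "e = d / (4 * real m)"
  define C where "C = 4 * (Im z)\<^sup>2 * (d * cmod z ^ (m - 1) / 4)\<^sup>2"
  define M where "M = PiM {1..m} (\<lambda>_. lborel :: real measure)"
  define box where "box = PiE {1..m} (\<lambda>i. if i = m then {d / 2..d} else {- e..e})"
  have "0 \<le> d" "0 \<le> e" by (simp_all add: d_def e_def)
  have "z \<noteq> 0" using assms(2) by auto
  have "ennreal (psi_lower_const m * (Im z)\<^sup>2 / cmod z ^ 6) = ennreal C * ennreal (d / 2 * (2 * e) ^ (m - 1))"
    using psi_lower_const_arith[of "cmod z" m "Im z"] assms(2,3) \<open>z \<noteq> 0\<close> \<open>0 \<le> d\<close> \<open>0 \<le> e\<close>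
    by (simp add: C_def d_def e_def ennreal_mult'[symmetric])
  also have "ennreal (d / 2 * (2 * e) ^ (m - 1)) = emeasure M box"
    unfolding M_def box_def by (rule emeasure_PiM_lborel_box_last[OF assms(3) \<open>0 \<le> d\<close> \<open>0 \<le> e\<close>, symmetric])
  also have "ennreal C * emeasure M box
      \<le> (\<integral>\<^sup>+ u. indicator (Dz (Suc m) z) (char_shear z m u)
                * (4 * (Im z)\<^sup>2 * (cmod (\<Sum>j=1..m. of_real (u j) * z ^ (j - 1)))\<^sup>2) \<partial>M)"
  proof (rule mult_emeasure_le_nn_integral)
    show "box \<in> sets M" unfolding M_def box_def by (rule sets_PiM_I_finite) auto
    fix u assume "u \<in> box"
    note lower_box = char_shear_mem_Dz_of_lower_box[OF assms d_def \<open>u \<in> box\<close>[unfolded box_def e_def]]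
    then have "C \<le> 4 * (Im z)\<^sup>2 * (cmod (\<Sum>j=1..m. of_real (u j) * z ^ (j - 1)))\<^sup>2"
      unfolding C_def using \<open>0 \<le> d\<close> by (intro mult_left_mono power_mono) auto
    then show "ennreal C \<le> ennreal (indicator (Dz (Suc m) z) (char_shear z m u)
                * (4 * (Im z)\<^sup>2 * (cmod (\<Sum>j=1..m. of_real (u j) * z ^ (j - 1)))\<^sup>2))"
      using lower_box(1) by (simp add: ennreal_leI)
  qed
  finally show ?thesis unfolding nn_integral_psi_char_shear[OF assms(1)] M_def .
qed

lemma set_integral_psi_integrand:
  "(LINT t : Dz n z | cube_measure n. psi_integrand n z t)
     = enn2real (\<integral>\<^sup>+ t. indicator (Dz n z) t * psi_integrand n z t \<partial>cube_measure n)"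
proof -
  have "integral\<^sup>L (cube_measure n) (\<lambda>t. indicator (Dz n z) t * psi_integrand n z t)
      = enn2real (\<integral>\<^sup>+ t. indicator (Dz n z) t * psi_integrand n z t \<partial>cube_measure n)"
    by (intro integral_eq_nn_integral borel_measurable_indicator_Dz_psi_integrand)
      (simp add: psi_integrand_def)
  then show ?thesis unfolding set_lebesgue_integral_def by simp
qed

lemma psi_eq_set_integral: "psi n z = (1 / \<bar>Im z\<bar>) * (LINT t : Dz n z | cube_measure n. psi_integrand n z t)"
  unfolding psi_def psi_integrand_def ..

lemma psi_bounds:
  assumes "Im z \<noteq> 0" and "1 \<le> cmod z" and "1 \<le> m"
  shows "psi_lower_const m * \<bar>Im z\<bar> / cmod z ^ 6 \<le> psi (Suc m) z"
    and "psi (Suc m) z \<le> psi_upper_const m * \<bar>Im z\<bar> / cmod z ^ 6"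
proof -
  define N where "N = (\<integral>\<^sup>+ t. indicator (Dz (Suc m) z) t * psi_integrand (Suc m) z t \<partial>cube_measure (Suc m))"
  have up: "N \<le> ennreal (psi_upper_const m * (Im z)\<^sup>2 / cmod z ^ 6)"
    unfolding N_def by (rule nn_integral_psi_le[OF assms])
  have lo: "ennreal (psi_lower_const m * (Im z)\<^sup>2 / cmod z ^ 6) \<le> N"
    unfolding N_def by (rule nn_integral_psi_ge[OF assms])
  have "N < top" using up by (rule le_less_trans) simp
  have c: "0 \<le> psi_lower_const m" "0 \<le> psi_upper_const m"
    by (simp_all add: psi_lower_const_def psi_upper_const_def)
  have psi: "psi (Suc m) z = enn2real N / \<bar>Im z\<bar>"
    unfolding psi_eq_set_integral set_integral_psi_integrand N_def by simp
  have rescale: "c * (Im z)\<^sup>2 / cmod z ^ 6 / \<bar>Im z\<bar> = c * \<bar>Im z\<bar> / cmod z ^ 6" for c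
    using assms(1) by (cases "0 < Im z") (simp_all add: field_simps power2_eq_square)
  have "enn2real (ennreal (psi_lower_const m * (Im z)\<^sup>2 / cmod z ^ 6)) \<le> enn2real N"
    by (rule enn2real_mono[OF lo \<open>N < top\<close>])
  then have "psi_lower_const m * (Im z)\<^sup>2 / cmod z ^ 6 / \<bar>Im z\<bar> \<le> enn2real N / \<bar>Im z\<bar>"
    using c by (intro divide_right_mono) simp_all
  then show "psi_lower_const m * \<bar>Im z\<bar> / cmod z ^ 6 \<le> psi (Suc m) z"
    unfolding psi rescale .
  have "enn2real N \<le> enn2real (ennreal (psi_upper_const m * (Im z)\<^sup>2 / cmod z ^ 6))"
    by (rule enn2real_mono[OF up]) simp
  then have "enn2real N / \<bar>Im z\<bar> \<le> psi_upper_const m * (Im z)\<^sup>2 / cmod z ^ 6 / \<bar>Im z\<bar>"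
    using c by (intro divide_right_mono) simp_all
  then show "psi (Suc m) z \<le> psi_upper_const m * \<bar>Im z\<bar> / cmod z ^ 6"
    unfolding psi rescale .
qed

lemma psi_lower_const_pos: "1 \<le> m \<Longrightarrow> 0 < psi_lower_const m"
  by (simp add: psi_lower_const_def)

lemma psi_lower_const_le_upper_const:
  assumes "1 \<le> m"
  shows "psi_lower_const m \<le> psi_upper_const m"
proof -
  have "1 \<le> (8 * real m) ^ (m - 1)" using assms by (intro one_le_power) simp
  then have "psi_lower_const m \<le> 1" by (simp add: psi_lower_const_def)
  also have "1 \<le> psi_upper_const m"
  proof -
    have ge1: "1 \<le> a * b" if "1 \<le> a" "1 \<le> b" for a b :: real
      using mult_mono[OF that] that by simp
    have "1 \<le> (2 * (4::real) ^ m)" using one_le_power[of "4::real" m] by linarith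
    then have "1 \<le> (2 * (4::real) ^ m) ^ m" by (rule one_le_power)
    moreover have "1 \<le> (real m)\<^sup>2" "1 \<le> ((4::real) ^ m)\<^sup>2"
      using assms by (simp_all add: one_le_power)
    ultimately show ?thesis unfolding psi_upper_const_def by (intro ge1) simp_all
  qed
  finally show ?thesis .
qed

theorem proposition3:
  fixes n :: nat
  assumes "n \<ge> 2"
  shows "\<exists>c1 c2 :: real. 0 < c1 \<and> c1 \<le> c2 \<and>
           (\<forall>z :: complex. Im z \<noteq> 0 \<and> cmod z \<ge> 1 \<longrightarrow>
              c1 * \<bar>Im z\<bar> / cmod z ^ 6 \<le> psi n z \<and>
              psi n z \<le> c2 * \<bar>Im z\<bar> / cmod z ^ 6)"
proof -
  obtain m where n: "n = Suc m" and m: "1 \<le> m" using assms by (cases n) auto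
  have "\<forall>z :: complex. Im z \<noteq> 0 \<and> cmod z \<ge> 1 \<longrightarrow>
          psi_lower_const m * \<bar>Im z\<bar> / cmod z ^ 6 \<le> psi n z \<and>
          psi n z \<le> psi_upper_const m * \<bar>Im z\<bar> / cmod z ^ 6"
    unfolding n using psi_bounds[OF _ _ m] by simp
  with psi_lower_const_pos[OF m] psi_lower_const_le_upper_const[OF m] show ?thesis
    by (intro exI[of _ "psi_lower_const m"] exI[of _ "psi_upper_const m"] conjI)
qed

end
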